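(* Let $X$ be a finite set with a probability measure $\mu$, let $f\in\Delta_X$, let $\mathcal F_0$ be a finite collection of real-valued functions on $X$, and let $\delta>0$. Consider the dual optimization problem \[ \text{maximize } \; -\log\Big(\mathbb E_\mu \exp\Big(\sum_{\varphi\in\mathcal F_0}\lambda_\varphi\varphi\Big)\Big) + \sum_{\varphi\in\mathcal F_0}\lambda_\varphi\big(\langle f,\varphi\rangle - \delta\big) \quad\text{subject to } \lambda_\varphi\ge 0 \;\;\forall\varphi\in\mathcal F_0. \] If $\{\lambda^*_\varphi\}$ is an optimal solution of this problem, then \[ \sum_{\varphi\in\mathcal F_0}\lambda^*_\varphi \le \frac{\mathrm{Ent}_\mu(f)}{\delta}. \]
   Context: $\langle f,g\rangle = \sum_{x\in X}\mu(x)f(x)g(x)$, $\mathbb E_\mu h = \sum_x\mu(x)h(x)$, $\Delta_X = \{f:X\to[0,\infty) : \mathbb E_\mu f = 1\}$, and $\mathrm{Ent}_\mu(f) = \mathbb E_\mu[f\log f]$ (with $0\log 0=0$). The displayed problem is the Lagrangian dual of the primal problem: minimize $\mathrm{Ent}_\mu(g)$ over $g\in\Delta_X$ subject to $\langle g,\varphi\rangle\ge\langle f,\varphi\rangle-\delta$ for all $\varphi\in\mathcal F_0$. *)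

theory Defs
  imports "HOL-Analysis.Analysis"
begin

definition prob_fn :: "('a::finite \<Rightarrow> real) \<Rightarrow> bool" where
  "prob_fn \<mu> \<longleftrightarrow> (\<forall>x. 0 \<le> \<mu> x) \<and> (\<Sum>x\<in>UNIV. \<mu> x) = 1"

definition Emu :: "('a::finite \<Rightarrow> real) \<Rightarrow> ('a \<Rightarrow> real) \<Rightarrow> real" where
  "Emu \<mu> h = (\<Sum>x\<in>UNIV. \<mu> x * h x)"

definition ip :: "('a::finite \<Rightarrow> real) \<Rightarrow> ('a \<Rightarrow> real) \<Rightarrow> ('a \<Rightarrow> real) \<Rightarrow> real" where
  "ip \<mu> f g = (\<Sum>x\<in>UNIV. \<mu> x * f x * g x)"

definition Delta :: "('a::finite \<Rightarrow> real) \<Rightarrow> ('a \<Rightarrow> real) set" where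
  "Delta \<mu> = {f. (\<forall>x. 0 \<le> f x) \<and> Emu \<mu> f = 1}"

text \<open>Entropy; note Isabelle's ln 0 = 0, so 0 * ln 0 = 0 as required.\<close>
definition Ent :: "('a::finite \<Rightarrow> real) \<Rightarrow> ('a \<Rightarrow> real) \<Rightarrow> real" where
  "Ent \<mu> f = Emu \<mu> (\<lambda>x. f x * ln (f x))"

definition dual_obj :: "('a::finite \<Rightarrow> real) \<Rightarrow> ('a \<Rightarrow> real) \<Rightarrow> ('a \<Rightarrow> real) set
    \<Rightarrow> real \<Rightarrow> (('a \<Rightarrow> real) \<Rightarrow> real) \<Rightarrow> real" where
  "dual_obj \<mu> f F0 \<delta> lam =
     - ln (Emu \<mu> (\<lambda>x. exp (\<Sum>\<phi>\<in>F0. lam \<phi> * \<phi> x)))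
     + (\<Sum>\<phi>\<in>F0. lam \<phi> * (ip \<mu> f \<phi> - \<delta>))"

definition dual_optimal :: "('a::finite \<Rightarrow> real) \<Rightarrow> ('a \<Rightarrow> real) \<Rightarrow> ('a \<Rightarrow> real) set
    \<Rightarrow> real \<Rightarrow> (('a \<Rightarrow> real) \<Rightarrow> real) \<Rightarrow> bool" where
  "dual_optimal \<mu> f F0 \<delta> lam \<longleftrightarrow>
     (\<forall>\<phi>\<in>F0. 0 \<le> lam \<phi>) \<and>
     (\<forall>lam'. (\<forall>\<phi>\<in>F0. 0 \<le> lam' \<phi>) \<longrightarrow> dual_obj \<mu> f F0 \<delta> lam' \<le> dual_obj \<mu> f F0 \<delta> lam)"

end

theory Submission
  imports Defs
begin

text \<open>The zero multiplier is feasible and has dual value 0, so the optimal value is nonnegative.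
  On the other hand, with \<open>S = \<Sum>\<phi>. \<lambda>\<^sub>\<phi> \<phi>\<close> the dual objective equals
  \<open>\<langle>f, S\<rangle> - log \<bbbE>\<^sub>\<mu> e\<^sup>S - \<delta> \<Sum>\<phi>. \<lambda>\<^sub>\<phi>\<close>, and the Donsker-Varadhan inequality
  \<open>\<langle>f, S\<rangle> - log \<bbbE>\<^sub>\<mu> e\<^sup>S \<le> Ent\<^sub>\<mu>(f)\<close> bounds this by \<open>Ent\<^sub>\<mu>(f) - \<delta> \<Sum>\<phi>. \<lambda>\<^sub>\<phi>\<close>.\<close>

lemma mult_ln_le_exp_div:
  fixes y s z :: real
  assumes "0 \<le> y" "0 < z"
  shows "y * (s - ln y - ln z) \<le> exp s / z - y"
proof (cases "y = 0")
  case True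
  then show ?thesis using assms by simp
next
  case False
  with assms have y: "0 < y" by simp
  have "s - ln y - ln z = ln (exp s / (y * z))"
    using y assms by (simp add: ln_div ln_mult)
  also have "\<dots> \<le> exp s / (y * z) - 1"
    using y assms by (intro ln_le_minus_one) simp
  finally have "y * (s - ln y - ln z) \<le> y * (exp s / (y * z) - 1)"
    using y by (intro mult_left_mono) auto
  also have "\<dots> = exp s / z - y" using y by (simp add: field_simps)
  finally show ?thesis .
qed

lemma Emu_pos:
  assumes "prob_fn \<mu>" and "\<And>x. 0 < h x"
  shows "0 < Emu \<mu> h"
proof -
  have \<mu>_nonneg: "\<And>x. 0 \<le> \<mu> x" and \<mu>_sum: "(\<Sum>x\<in>UNIV. \<mu> x) = 1"
    using assms(1) by (auto simp: prob_fn_def)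
  obtain x0 where "0 < \<mu> x0"
    using \<mu>_nonneg \<mu>_sum by (metis less_eq_real_def sum.neutral zero_neq_one)
  then have "0 < \<mu> x0 * h x0" using assms(2) by simp
  also have "\<dots> \<le> Emu \<mu> h"
    unfolding Emu_def using \<mu>_nonneg assms(2)
    by (intro member_le_sum) (auto intro: less_imp_le mult_nonneg_nonneg)
  finally show ?thesis .
qed

lemma Emu_mult_le_Ent_plus_ln_Emu_exp:
  assumes "prob_fn \<mu>" and "f \<in> Delta \<mu>"
  shows "Emu \<mu> (\<lambda>x. f x * S x) \<le> Ent \<mu> f + ln (Emu \<mu> (\<lambda>x. exp (S x)))"
proof -
  have \<mu>_nonneg: "\<And>x. 0 \<le> \<mu> x" using assms(1) by (simp add: prob_fn_def)
  have f_nonneg: "\<And>x. 0 \<le> f x" and f_mass: "(\<Sum>x\<in>UNIV. \<mu> x * f x) = 1"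
    using assms(2) by (auto simp: Delta_def Emu_def)
  define Z where "Z = Emu \<mu> (\<lambda>x. exp (S x))"
  have Z: "0 < Z" unfolding Z_def using assms(1) by (rule Emu_pos) simp
  have "Emu \<mu> (\<lambda>x. f x * S x) - Ent \<mu> f - ln Z
        = (\<Sum>x\<in>UNIV. \<mu> x * (f x * (S x - ln (f x) - ln Z)))"
    unfolding Ent_def Emu_def using f_mass
    by (simp add: algebra_simps sum_subtractf sum.distrib flip: sum_distrib_left)
  also have "\<dots> \<le> (\<Sum>x\<in>UNIV. \<mu> x * (exp (S x) / Z - f x))"
    using \<mu>_nonneg f_nonneg Z
    by (intro sum_mono mult_left_mono mult_ln_le_exp_div) auto
  also have "\<dots> = 0"
    using Z f_mass by (simp add: Z_def Emu_def right_diff_distrib sum_subtractf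
        times_divide_eq_right flip: sum_divide_distrib)
  finally show ?thesis by (simp add: Z_def)
qed

lemma dual_obj_zero:
  assumes "prob_fn \<mu>"
  shows "dual_obj \<mu> f F0 \<delta> (\<lambda>_. 0) = 0"
  using assms by (simp add: dual_obj_def Emu_def prob_fn_def)

lemma dual_obj_eq:
  assumes "finite F0"
  shows "dual_obj \<mu> f F0 \<delta> lam =
    Emu \<mu> (\<lambda>x. f x * (\<Sum>\<phi>\<in>F0. lam \<phi> * \<phi> x))
    - ln (Emu \<mu> (\<lambda>x. exp (\<Sum>\<phi>\<in>F0. lam \<phi> * \<phi> x))) - \<delta> * (\<Sum>\<phi>\<in>F0. lam \<phi>)"
proof -
  have "(\<Sum>\<phi>\<in>F0. lam \<phi> * ip \<mu> f \<phi>) = Emu \<mu> (\<lambda>x. f x * (\<Sum>\<phi>\<in>F0. lam \<phi> * \<phi> x))"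
    unfolding ip_def Emu_def
    by (simp add: sum_distrib_left sum_distrib_right algebra_simps sum.swap[of _ F0])
  then show ?thesis
    unfolding dual_obj_def by (simp add: algebra_simps sum_subtractf sum_distrib_left)
qed

lemma dual_obj_le_Ent:
  assumes "prob_fn \<mu>" and "f \<in> Delta \<mu>" and "finite F0"
  shows "dual_obj \<mu> f F0 \<delta> lam \<le> Ent \<mu> f - \<delta> * (\<Sum>\<phi>\<in>F0. lam \<phi>)"
  using dual_obj_eq[OF assms(3), of \<mu> f \<delta> lam]
    Emu_mult_le_Ent_plus_ln_Emu_exp[OF assms(1,2), of "\<lambda>x. \<Sum>\<phi>\<in>F0. lam \<phi> * \<phi> x"]
  by linarith

theorem lemma2p3:
  fixes \<mu> f :: "'a::finite \<Rightarrow> real" and F0 :: "('a \<Rightarrow> real) set"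
    and \<delta> :: real and lam :: "('a \<Rightarrow> real) \<Rightarrow> real"
  assumes "prob_fn \<mu>" and "f \<in> Delta \<mu>" and "finite F0" and "\<delta> > 0"
    and "dual_optimal \<mu> f F0 \<delta> lam"
  shows "(\<Sum>\<phi>\<in>F0. lam \<phi>) \<le> Ent \<mu> f / \<delta>"
proof -
  have "0 = dual_obj \<mu> f F0 \<delta> (\<lambda>_. 0)" using assms(1) by (rule dual_obj_zero[symmetric])
  also have "\<dots> \<le> dual_obj \<mu> f F0 \<delta> lam"
    using assms(5) by (simp add: dual_optimal_def)
  also have "\<dots> \<le> Ent \<mu> f - \<delta> * (\<Sum>\<phi>\<in>F0. lam \<phi>)"
    using assms(1-3) by (rule dual_obj_le_Ent)
  finally show ?thesis using assms(4) by (simp add: field_simps)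
qed

end
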